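(* Let $\mathcal{Y}\in\mathbb{R}^{n_1\times n_2\times n_3}$ have tubal rank at most $r$, let $\Phi=\phi\circ\mathrm{vec}$ with $\phi\in\mathbb{R}^{m\times n_1n_2n_3}$ of full row rank, $\Phi^{-1}$ its Moore–Penrose pseudo-inverse, and $\mathbf b=\Phi(\mathcal{Y})$. Run either version (LRAP4TS or ELRAP4TS) of the algorithm described in the context. Then for every iteration index $k\ge1$ reached by the algorithm, $$\|\mathcal{R}_k\|_F\le\Big(\sqrt{1-\tfrac{1}{\min(n_1,n_2)}}\Big)^{k-1}\,\|\Phi^{-1}(\mathbf b)\|_F .$$
   Context: Notation: t-product $*$, conjugate transpose ${}^*$ and t-SVD of third-order tensors as usual: the t-product multiplies frontal slices in the Fourier domain (DFT along the third mode); the t-SVD $\mathcal{A}=\mathcal{U}*\mathcal{S}*\mathcal{V}^*$ has $\mathcal{U},\mathcal{V}$ orthogonal and $\mathcal{S}$ f-diagonal (diagonal frontal slices), obtained from SVDs of the Fourier-domain slices with singular values in nonincreasing order. Tubal rank = number of nonzero singular tubes $\mathcal{S}(i,i,:)$. $\Phi^{-1}\Phi$ is the orthogonal projector of $\mathbb{R}^{n_1\times n_2\times n_3}$ onto the orthogonal complement of $\ker\Phi$, and $\Phi\Phi^{-1}$ is the identity on $\mathbb{R}^m$. Algorithm (integer $s\ge1$ given): set $\mathcal{R}_0=\Phi^{-1}\Phi(\mathcal{Y})$, $\mathcal{R}_1=\mathcal{R}_0$, $\mathcal{X}_0=0$, $\widehat{\mathcal{Y}}_0=0$. For $k=1,2,\dots,\lceil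 r/s\rceil$ (stop if $\mathcal{R}_k=0$): Step 1: compute the t-SVD $\mathcal{R}_k=\mathcal{U}_k*\mathcal{S}_k*\mathcal{V}_k^*$ and set $\mathcal{M}_{k,j}=\mathcal{U}_k(:,j,:)*\frac{\mathcal{S}_k(j,j,:)}{\|\mathcal{S}_k(j,j,:)\|_F}*\mathcal{V}_k(:,j,:)^*$, $j=1,\dots,s$. Step 2/3, standard version (LRAP4TS): let $\theta^k\in\mathbb{R}^{sk}$ minimize $\|\sum_{i=1}^k\sum_{j=1}^s\theta_{i,j}\Phi^{-1}\Phi(\mathcal{M}_{i,j})-\mathcal{R}_0\|_F^2$, set $\mathcal{X}_k=\sum_{i,j}\theta^k_{i,j}\Phi^{-1}\Phi(\mathcal{M}_{i,j})$. Economic version (ELRAP4TS): let $(\alpha_0^k,\dots,\alpha_s^k)\in\mathbb{R}^{s+1}$ minimize $\|\alpha_0\mathcal{X}_{k-1}+\sum_{j=1}^s\alpha_j\Phi^{-1}\Phi(\mathcal{M}_{k,j})-\mathcal{R}_0\|_F^2$, set $\mathcal{X}_k=\alpha_0^k\mathcal{X}_{k-1}+\sum_j\alpha_j^k\Phi^{-1}\Phi(\mathcal{M}_{k,j})$ and $\widehat{\mathcal{Y}}_k=\alpha_0^k\widehat{\mathcal{Y}}_{k-1}+\sum_j\alpha^k_j\mathcal{M}_{k,j}$. In both versions set $\mathcal{R}_{k+1}=\Phi^{-1}\Phi(\mathcal{Y})-\mathcal{X}_k$. Output: $\mathcal{M}(\theta^k)=\sum_{i,j}\theta^k_{i,j}\mathcal{M}_{i,j}$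 (standard) or $\widehat{\mathcal{Y}}_k$ (economic). *)

theory Defs
  imports Complex_Main
begin

text \<open>Third-order real tensors of size a x b x c are represented as functions
  nat => nat => nat => real (0-based indices) that vanish outside the index box.
  Matrices are nat => nat => real, vectors nat => real, again 0-based.\<close>

type_synonym tensor = "nat \<Rightarrow> nat \<Rightarrow> nat \<Rightarrow> real"
type_synonym rmat = "nat \<Rightarrow> nat \<Rightarrow> real"
type_synonym rvec = "nat \<Rightarrow> real"

definition is_tensor :: "nat \<Rightarrow> nat \<Rightarrow> nat \<Rightarrow> tensor \<Rightarrow> bool" where
  "is_tensor a b c X \<longleftrightarrow> (\<forall>i j l. \<not> (i < a \<and> j < b \<and> l < c) \<longrightarrow> X i j l = 0)"

definition zero_tensor :: tensor where
  "zero_tensor = (\<lambda>i j l. 0)"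

definition fro :: "nat \<Rightarrow> nat \<Rightarrow> nat \<Rightarrow> tensor \<Rightarrow> real" where
  "fro a b c X = sqrt (\<Sum>i<a. \<Sum>j<b. \<Sum>l<c. (X i j l)\<^sup>2)"

text \<open>t-product of A (a x b x d) and B (b x c x d): circular convolution of the frontal
  slices along the third mode, which is the same as slice-wise multiplication in the
  Fourier domain (Kilmer--Martin: A * B = fold (bcirc A . unfold B)).\<close>
definition tprod :: "nat \<Rightarrow> nat \<Rightarrow> nat \<Rightarrow> nat \<Rightarrow> tensor \<Rightarrow> tensor \<Rightarrow> tensor" where
  "tprod a b c d A B = (\<lambda>i j l. if i < a \<and> j < c \<and> l < d
      then (\<Sum>p<b. \<Sum>q<d. A i p q * B p j ((l + d - q) mod d)) else 0)"

text \<open>(Conjugate) transpose of a real a x b x c tensor: transpose every frontal slice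
  and reverse the order of frontal slices 2..c.\<close>
definition ctrans :: "nat \<Rightarrow> nat \<Rightarrow> nat \<Rightarrow> tensor \<Rightarrow> tensor" where
  "ctrans a b c A = (\<lambda>i j l. if i < b \<and> j < a \<and> l < c then A j i ((c - l) mod c) else 0)"

definition ident :: "nat \<Rightarrow> nat \<Rightarrow> tensor" where
  "ident a c = (\<lambda>i j l. if i < a \<and> i = j \<and> l = 0 \<and> 0 < c then 1 else 0)"

definition t_orthogonal :: "nat \<Rightarrow> nat \<Rightarrow> tensor \<Rightarrow> bool" where
  "t_orthogonal a c U \<longleftrightarrow>
     tprod a a a c (ctrans a a c U) U = ident a c \<and> tprod a a a c U (ctrans a a c U) = ident a c"

definition f_diagonal :: "tensor \<Rightarrow> bool" where
  "f_diagonal S \<longleftrightarrow> (\<forall>i j l. i \<noteq> j \<longrightarrow> S i j l = 0)"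

definition dft3 :: "nat \<Rightarrow> tensor \<Rightarrow> nat \<Rightarrow> nat \<Rightarrow> nat \<Rightarrow> complex" where
  "dft3 c X = (\<lambda>i j l. \<Sum>q<c. complex_of_real (X i j q) * cis (- 2 * pi * real l * real q / real c))"

text \<open>t-SVD  R = U * S * V^*  of an a x b x c tensor R: U, V orthogonal, S f-diagonal, and
  in the Fourier domain the diagonal entries of every frontal slice of S are the singular
  values of the corresponding slice of R, i.e. real, nonnegative and nonincreasing.\<close>
definition is_tsvd :: "nat \<Rightarrow> nat \<Rightarrow> nat \<Rightarrow> tensor \<Rightarrow> tensor \<Rightarrow> tensor \<Rightarrow> tensor \<Rightarrow> bool" where
  "is_tsvd a b c R U S V \<longleftrightarrow>
     is_tensor a a c U \<and> is_tensor a b c S \<and> is_tensor b b c V \<and>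
     t_orthogonal a c U \<and> t_orthogonal b c V \<and> f_diagonal S \<and>
     (\<forall>l<c. \<forall>j<min a b. Im (dft3 c S j j l) = 0 \<and> 0 \<le> Re (dft3 c S j j l)) \<and>
     (\<forall>l<c. \<forall>j. Suc j < min a b \<longrightarrow> Re (dft3 c S (Suc j) (Suc j) l) \<le> Re (dft3 c S j j l)) \<and>
     R = tprod a a b c U (tprod a b b c S (ctrans b b c V))"

definition tubal_rank_le :: "nat \<Rightarrow> nat \<Rightarrow> nat \<Rightarrow> tensor \<Rightarrow> nat \<Rightarrow> bool" where
  "tubal_rank_le a b c Y r \<longleftrightarrow>
     (\<exists>U S V. is_tsvd a b c Y U S V \<and> card {j. j < min a b \<and> (\<exists>l<c. S j j l \<noteq> 0)} \<le> r)"

text \<open>Building blocks of M_{k,j} (0-based j):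
  U(:,j,:) * (S(j,j,:)/||S(j,j,:)||_F) * V(:,j,:)^*.\<close>
definition lat_slice :: "tensor \<Rightarrow> nat \<Rightarrow> tensor" where
  "lat_slice U j = (\<lambda>i p l. if p = 0 then U i j l else 0)"

definition tube_norm :: "nat \<Rightarrow> tensor \<Rightarrow> nat \<Rightarrow> real" where
  "tube_norm c S j = sqrt (\<Sum>l<c. (S j j l)\<^sup>2)"

definition normalized_tube :: "nat \<Rightarrow> tensor \<Rightarrow> nat \<Rightarrow> tensor" where
  "normalized_tube c S j = (\<lambda>x y l. if x = 0 \<and> y = 0 \<and> l < c then S j j l / tube_norm c S j else 0)"

definition rank1_term :: "nat \<Rightarrow> nat \<Rightarrow> nat \<Rightarrow> tensor \<Rightarrow> tensor \<Rightarrow> tensor \<Rightarrow> nat \<Rightarrow> tensor" where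
  "rank1_term a b c U S V j =
     tprod a 1 b c (tprod a 1 1 c (lat_slice U j) (normalized_tube c S j)) (ctrans b 1 c (lat_slice V j))"

definition tvec :: "nat \<Rightarrow> nat \<Rightarrow> nat \<Rightarrow> tensor \<Rightarrow> rvec" where
  "tvec a b c X = (\<lambda>idx. if idx < a * b * c then X (idx mod a) ((idx div a) mod b) (idx div (a * b)) else 0)"

definition tunvec :: "nat \<Rightarrow> nat \<Rightarrow> nat \<Rightarrow> rvec \<Rightarrow> tensor" where
  "tunvec a b c v = (\<lambda>i j l. if i < a \<and> j < b \<and> l < c then v (i + a * j + a * b * l) else 0)"

definition mvmul :: "nat \<Rightarrow> nat \<Rightarrow> rmat \<Rightarrow> rvec \<Rightarrow> rvec" where
  "mvmul p q A v = (\<lambda>i. if i < p then (\<Sum>k<q. A i k * v k) else 0)"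

definition mmul :: "nat \<Rightarrow> nat \<Rightarrow> nat \<Rightarrow> rmat \<Rightarrow> rmat \<Rightarrow> rmat" where
  "mmul p q r A B = (\<lambda>i j. if i < p \<and> j < r then (\<Sum>k<q. A i k * B k j) else 0)"

definition is_matrix :: "nat \<Rightarrow> nat \<Rightarrow> rmat \<Rightarrow> bool" where
  "is_matrix p q A \<longleftrightarrow> (\<forall>i j. \<not> (i < p \<and> j < q) \<longrightarrow> A i j = 0)"

definition full_row_rank :: "nat \<Rightarrow> nat \<Rightarrow> rmat \<Rightarrow> bool" where
  "full_row_rank p q A \<longleftrightarrow>
     (\<forall>x::rvec. (\<forall>j<q. (\<Sum>i<p. x i * A i j) = 0) \<longrightarrow> (\<forall>i<p. x i = 0))"

definition is_mp_inverse :: "nat \<Rightarrow> nat \<Rightarrow> rmat \<Rightarrow> rmat \<Rightarrow> bool" where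
  "is_mp_inverse p q A B \<longleftrightarrow>
     is_matrix q p B \<and>
     mmul p p q (mmul p q p A B) A = A \<and>
     mmul q q p (mmul q p q B A) B = B \<and>
     (\<forall>i j. mmul p q p A B i j = mmul p q p A B j i) \<and>
     (\<forall>i j. mmul q p q B A i j = mmul q p q B A j i)"

definition Phi_op :: "nat \<Rightarrow> nat \<Rightarrow> nat \<Rightarrow> nat \<Rightarrow> rmat \<Rightarrow> tensor \<Rightarrow> rvec" where
  "Phi_op a b c m phi X = mvmul m (a * b * c) phi (tvec a b c X)"

definition Phi_inv_op :: "nat \<Rightarrow> nat \<Rightarrow> nat \<Rightarrow> nat \<Rightarrow> rmat \<Rightarrow> rvec \<Rightarrow> tensor" where
  "Phi_inv_op a b c m phiinv v = tunvec a b c (mvmul (a * b * c) m phiinv v)"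

definition proj_op :: "nat \<Rightarrow> nat \<Rightarrow> nat \<Rightarrow> nat \<Rightarrow> rmat \<Rightarrow> rmat \<Rightarrow> tensor \<Rightarrow> tensor" where
  "proj_op a b c m phi phiinv X = Phi_inv_op a b c m phiinv (Phi_op a b c m phi X)"

text \<open>Standard version (LRAP4TS), steps 2/3 of iteration k: theta k minimises the
  least-squares functional over all coefficient vectors in R^{sk}, X_k is the fit,
  R_{k+1} = Phi^{-1}Phi(Y) - X_k.  Here M i j is M_{i,j} (i = 1..k, j = 0..s-1).\<close>
definition std_comb :: "nat \<Rightarrow> nat \<Rightarrow> (tensor \<Rightarrow> tensor) \<Rightarrow> (nat \<Rightarrow> nat \<Rightarrow> tensor)
     \<Rightarrow> (nat \<Rightarrow> nat \<Rightarrow> real) \<Rightarrow> tensor" where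
  "std_comb k s P M th = (\<lambda>x y z. \<Sum>i\<in>{1..k}. \<Sum>j<s. th i j * P (M i j) x y z)"

definition econ_comb :: "nat \<Rightarrow> (tensor \<Rightarrow> tensor) \<Rightarrow> tensor \<Rightarrow> (nat \<Rightarrow> tensor)
     \<Rightarrow> (nat \<Rightarrow> real) \<Rightarrow> tensor" where
  "econ_comb s P Xprev Mk al = (\<lambda>x y z. al 0 * Xprev x y z + (\<Sum>j<s. al (Suc j) * P (Mk j) x y z))"

definition tdiff :: "tensor \<Rightarrow> tensor \<Rightarrow> tensor" where
  "tdiff A B = (\<lambda>x y z. A x y z - B x y z)"

text \<open>A run of N iterations (k = 1..N) of LRAP4TS (econ = False) or ELRAP4TS (econ = True).\<close>
definition lrap_run ::
  "bool \<Rightarrow> nat \<Rightarrow> nat \<Rightarrow> nat \<Rightarrow> nat \<Rightarrow> rmat \<Rightarrow> rmat \<Rightarrow> tensor \<Rightarrow> nat \<Rightarrow> nat \<Rightarrow>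
   (nat \<Rightarrow> tensor) \<Rightarrow> (nat \<Rightarrow> tensor) \<Rightarrow> (nat \<Rightarrow> tensor) \<Rightarrow> (nat \<Rightarrow> tensor) \<Rightarrow> (nat \<Rightarrow> tensor) \<Rightarrow>
   (nat \<Rightarrow> nat \<Rightarrow> nat \<Rightarrow> real) \<Rightarrow> (nat \<Rightarrow> nat \<Rightarrow> real) \<Rightarrow> bool" where
  "lrap_run econ n1 n2 n3 m phi phiinv Y s N R X U S V th al \<longleftrightarrow>
    (let P = proj_op n1 n2 n3 m phi phiinv;
         R0 = P Y;
         M = (\<lambda>i j. rank1_term n1 n2 n3 (U i) (S i) (V i) j)
     in R 1 = R0 \<and> X 0 = zero_tensor \<and>
        (\<forall>k. 1 \<le> k \<and> k \<le> N \<longrightarrow>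
           R k \<noteq> zero_tensor \<and>
           is_tsvd n1 n2 n3 (R k) (U k) (S k) (V k) \<and>
           (if econ then
              X k = econ_comb s P (X (k - 1)) (M k) (al k) \<and>
              (\<forall>al'. (fro n1 n2 n3 (tdiff (X k) R0))\<^sup>2
                        \<le> (fro n1 n2 n3 (tdiff (econ_comb s P (X (k - 1)) (M k) al') R0))\<^sup>2)
            else
              X k = std_comb k s P M (th k) \<and>
              (\<forall>th'. (fro n1 n2 n3 (tdiff (X k) R0))\<^sup>2
                        \<le> (fro n1 n2 n3 (tdiff (std_comb k s P M th') R0))\<^sup>2)) \<and>
           R (Suc k) = tdiff R0 (X k)))"

end

theory Submission
  imports Defs
begin

text \<open>Let P = Phi^-1 Phi, an orthogonal projector fixing every residual R_k.
  With R_k = U * S * V^* and sigma = ||S(1,1,:)||_F, the first normalised rank-one term M of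
  the t-SVD satisfies <R_k, P M> = <R_k, M> = sigma and ||P M|| \<le> ||M|| \<le> 1.  Either version of
  the algorithm fits at least as well as X_{k-1} + sigma P M, whence
  ||R_{k+1}||^2 \<le> ||R_k - sigma P M||^2 \<le> ||R_k||^2 - sigma^2.  Orthogonal invariance of the
  t-product gives ||R_k||^2 = \<Sum>_j ||S(j,j,:)||^2, and by Parseval along the third mode the
  ordering of the Fourier-domain singular values makes sigma the largest of these min(n1,n2) tube
  norms, so ||R_k||^2 \<le> min(n1,n2) sigma^2.  Hence ||R_{k+1}||^2 \<le> (1 - 1/min(n1,n2)) ||R_k||^2,
  and R_1 = Phi^-1(b).\<close>

section \<open>Circular index arithmetic\<close>

lemma eq_if_int_mod_eq:
  "x < (c::nat) \<Longrightarrow> y < c \<Longrightarrow> int x mod int c = int y mod int c \<Longrightarrow> x = y"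
  by (metis mod_less of_nat_eq_iff zmod_int)

lemma int_circ_sub: "q < (c::nat) \<Longrightarrow> int ((l + c - q) mod c) = (int l - int q) mod int c"
proof -
  assume "q < c"
  then have "int (l + c - q) = int l - int q + int c" by simp
  then show ?thesis by (simp add: zmod_int)
qed

lemma int_circ_neg: "q < (c::nat) \<Longrightarrow> int ((c - q) mod c) = (- int q) mod int c"
  using int_circ_sub[of q c 0] by simp

lemma circ_sub_add_cancel: "q < (c::nat) \<Longrightarrow> q' < c \<Longrightarrow> ((q' + q) mod c + c - q) mod c = q'"
  apply (rule eq_if_int_mod_eq[where c = c], simp, simp)
  apply (subst int_circ_sub, simp)+
  apply (simp add: zmod_int mod_simps algebra_simps)
  done

lemma circ_add_sub_cancel: "q < (c::nat) \<Longrightarrow> q' < c \<Longrightarrow> ((q' + c - q) mod c + q) mod c = q'"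
  by (rule eq_if_int_mod_eq[where c = c], simp, simp) (simp add: zmod_int mod_simps algebra_simps)

lemma circ_sub_add: "q < (c::nat) \<Longrightarrow> q' < c \<Longrightarrow>
    (l + c - (q' + q) mod c) mod c = ((l + c - q) mod c + c - q') mod c"
  apply (rule eq_if_int_mod_eq[where c = c], simp, simp)
  apply (subst int_circ_sub, simp)+
  apply (simp add: zmod_int mod_simps algebra_simps)
  done

lemma circ_neg_neg: "q < (c::nat) \<Longrightarrow> (c - (c - q) mod c) mod c = q"
  apply (rule eq_if_int_mod_eq[where c = c], simp, simp)
  apply (subst int_circ_neg, simp)+
  apply (simp add: zmod_int mod_simps algebra_simps)
  done

lemma circ_sub_neg: "q < (c::nat) \<Longrightarrow> l < c \<Longrightarrow> ((l + c - q) mod c + c - (c - q) mod c) mod c = l"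
  apply (rule eq_if_int_mod_eq[where c = c], simp, simp)
  apply (subst int_circ_sub, simp)+
  apply (subst int_circ_neg, simp)+
  apply (simp add: zmod_int mod_simps algebra_simps)
  done

lemma circ_neg_sub: "q < (c::nat) \<Longrightarrow> l < c \<Longrightarrow> (c - (l + c - q) mod c) mod c = (q + c - l) mod c"
  apply (rule eq_if_int_mod_eq[where c = c], simp, simp)
  apply (subst int_circ_neg, simp)
  apply (subst int_circ_sub, simp)+
  apply (simp add: zmod_int mod_simps algebra_simps)
  done

lemma circ_sub_eq_0_iff: "q < (c::nat) \<Longrightarrow> l < c \<Longrightarrow> (l + c - q) mod c = 0 \<longleftrightarrow> q = l"
proof
  assume qc: "q < c" and lc: "l < c" and "(l + c - q) mod c = 0"
  then have "int ((l + c - q) mod c) = 0" by simp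
  then have "(int l - int q) mod int c = 0" by (simp only: int_circ_sub[OF qc])
  then have "int q mod int c = int l mod int c"
    by (simp add: mod_eq_dvd_iff mod_eq_0_iff_dvd dvd_diff_commute)
  then show "q = l" using qc lc by (rule eq_if_int_mod_eq[rotated 2])
qed simp

section \<open>The Frobenius inner product and the t-product\<close>

definition tinner :: "nat \<Rightarrow> nat \<Rightarrow> nat \<Rightarrow> tensor \<Rightarrow> tensor \<Rightarrow> real" where
  "tinner a b c X Z = (\<Sum>i<a. \<Sum>j<b. \<Sum>l<c. X i j l * Z i j l)"

lemma tinner_commute: "tinner a b c X Z = tinner a b c Z X"
  by (simp add: tinner_def mult.commute)

lemma tinner_self_nonneg: "0 \<le> tinner a b c X X"
  by (simp add: tinner_def sum_nonneg)

lemma fro_eq_sqrt_tinner: "fro a b c Z = sqrt (tinner a b c Z Z)"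
  by (simp add: fro_def tinner_def power2_eq_square)

lemma fro_power2: "(fro a b c Z)\<^sup>2 = tinner a b c Z Z"
  by (simp add: fro_eq_sqrt_tinner tinner_self_nonneg)

lemma tinner_diff_scale_left:
  "tinner a b c (\<lambda>x y z. A x y z - u * B x y z) C = tinner a b c A C - u * tinner a b c B C"
  by (simp add: tinner_def left_diff_distrib sum_subtractf sum_distrib_left mult.assoc)

lemma tinner_diff_scale_self:
  "tinner a b c (\<lambda>x y z. A x y z - u * B x y z) (\<lambda>x y z. A x y z - u * B x y z)
     = tinner a b c A A - 2 * u * tinner a b c A B + u\<^sup>2 * tinner a b c B B"
proof -
  let ?D = "\<lambda>x y z. A x y z - u * B x y z"
  have "tinner a b c ?D ?D = tinner a b c A ?D - u * tinner a b c B ?D"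
    by (rule tinner_diff_scale_left)
  also have "tinner a b c A ?D = tinner a b c A A - u * tinner a b c A B"
    by (subst (1 2) tinner_commute) (rule tinner_diff_scale_left)
  also have "tinner a b c B ?D = tinner a b c A B - u * tinner a b c B B"
    by (subst tinner_commute) (rule tinner_diff_scale_left)
  finally show ?thesis by (simp add: power2_eq_square algebra_simps)
qed

lemma tinner_tdiff_commute: "tinner a b c (tdiff A B) (tdiff A B) = tinner a b c (tdiff B A) (tdiff B A)"
  by (simp add: tinner_def tdiff_def algebra_simps)

lemma tprod_is_tensor: "is_tensor a c d (tprod a b c d A B)"
  by (simp add: is_tensor_def tprod_def)

lemma tprod_assoc:
  assumes d: "0 < d"
  shows "tprod a b c d A (tprod b e c d B C) = tprod a e c d (tprod a b e d A B) C"
proof (intro ext)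
  fix i j l
  show "tprod a b c d A (tprod b e c d B C) i j l = tprod a e c d (tprod a b e d A B) C i j l"
  proof (cases "i < a \<and> j < c \<and> l < d")
    case False then show ?thesis by (auto simp add: tprod_def)
  next
    case True
    then have l: "l < d" by simp
    have "tprod a b c d A (tprod b e c d B C) i j l =
      (\<Sum>(p,q,p',q')\<in>{..<b}\<times>{..<d}\<times>{..<e}\<times>{..<d}.
         A i p q * B p p' q' * C p' j ((((l + d - q) mod d) + d - q') mod d))"
      using True d
      by (simp add: tprod_def sum.cartesian_product sum_distrib_left mult.assoc)
         (rule sum.cong[OF refl], auto)
    also have "\<dots> = (\<Sum>(p',q'',p,q)\<in>{..<e}\<times>{..<d}\<times>{..<b}\<times>{..<d}.
         A i p q * B p p' ((q'' + d - q) mod d) * C p' j ((l + d - q'') mod d))"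
      by (rule sum.reindex_bij_witness[where j = "\<lambda>(p,q,p',q'). (p', (q' + q) mod d, p, q)"
                                         and i = "\<lambda>(p',q'',p,q). (p, q, p', (q'' + d - q) mod d)"])
         (use d l in \<open>auto simp: circ_sub_add_cancel circ_add_sub_cancel circ_sub_add\<close>)
    also have "\<dots> = tprod a e c d (tprod a b e d A B) C i j l"
      using True d
      by (simp add: tprod_def sum.cartesian_product sum_distrib_right mult.assoc)
         (rule sum.cong[OF refl], auto)
    finally show ?thesis .
  qed
qed

lemma tinner_tprod_left:
  assumes d: "0 < d"
  shows "tinner a c d (tprod a b c d A B) C = tinner b c d B (tprod b a c d (ctrans a b d A) C)"
proof -
  have "tinner a c d (tprod a b c d A B) C =
     (\<Sum>(i,j,l,p,q)\<in>{..<a}\<times>{..<c}\<times>{..<d}\<times>{..<b}\<times>{..<d}. A i p q * B p j ((l + d - q) mod d) * C i j l)"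
    by (simp add: tinner_def tprod_def sum.cartesian_product sum_distrib_right mult.assoc)
       (rule sum.cong[OF refl], auto)
  also have "\<dots> = (\<Sum>(p,j,l',i,q')\<in>{..<b}\<times>{..<c}\<times>{..<d}\<times>{..<a}\<times>{..<d}.
       B p j l' * (A i p ((d - q') mod d) * C i j ((l' + d - q') mod d)))"
    by (rule sum.reindex_bij_witness[where j = "\<lambda>(i,j,l,p,q). (p, j, (l + d - q) mod d, i, (d - q) mod d)"
                                       and i = "\<lambda>(p,j,l',i,q'). (i, j, (l' + d - q') mod d, p, (d - q') mod d)"])
       (use d in \<open>clarsimp simp: circ_neg_neg circ_sub_neg\<close>)+
  also have "\<dots> = tinner b c d B (tprod b a c d (ctrans a b d A) C)"
    using d by (simp add: tinner_def tprod_def ctrans_def sum.cartesian_product sum_distrib_left mult.assoc)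
      (rule sum.cong[OF refl], auto)
  finally show ?thesis .
qed

lemma tinner_tprod_right:
  assumes d: "0 < d"
  shows "tinner a c d C (tprod a b c d A B) = tinner a b d (tprod a c b d C (ctrans b c d B)) A"
proof -
  have "tinner a c d C (tprod a b c d A B) =
     (\<Sum>(i,j,l,p,q)\<in>{..<a}\<times>{..<c}\<times>{..<d}\<times>{..<b}\<times>{..<d}. C i j l * (A i p q * B p j ((l + d - q) mod d)))"
    by (simp add: tinner_def tprod_def sum.cartesian_product sum_distrib_left mult.assoc)
       (rule sum.cong[OF refl], auto)
  also have "\<dots> = (\<Sum>(i,p,q,j,l)\<in>{..<a}\<times>{..<b}\<times>{..<d}\<times>{..<c}\<times>{..<d}.
       C i j l * B p j ((l + d - q) mod d) * A i p q)"
    by (rule sum.reindex_bij_witness[where j = "\<lambda>(i,j,l,p,q). (i,p,q,j,l)"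
                                       and i = "\<lambda>(i,p,q,j,l). (i,j,l,p,q)"]) force+
  also have "\<dots> = tinner a b d (tprod a c b d C (ctrans b c d B)) A"
    using d by (simp add: tinner_def tprod_def ctrans_def sum.cartesian_product sum_distrib_right mult.assoc)
      (rule sum.cong[OF refl], auto simp: circ_neg_sub)
  finally show ?thesis .
qed

lemma ctrans_ctrans:
  assumes "is_tensor a b c A" "0 < c"
  shows "ctrans b a c (ctrans a b c A) = A"
  using assms by (auto simp: ctrans_def is_tensor_def circ_neg_neg fun_eq_iff)

lemma sum_sum_delta:
  "i < (a::nat) \<Longrightarrow> q0 < (c::nat) \<Longrightarrow>
     (\<Sum>p<a. \<Sum>q<c. if p = i \<and> q = q0 then f p q else 0) = (f i q0 :: real)"
proof -
  assume i: "i < a" and q0: "q0 < c"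
  have "(\<Sum>p<a. \<Sum>q<c. if p = i \<and> q = q0 then f p q else 0) = (\<Sum>p<a. if p = i then f p q0 else 0)"
    using q0 by (intro sum.cong refl) (auto simp: if_distrib sum.delta')
  also have "\<dots> = f i q0" using i by simp
  finally show ?thesis .
qed

lemma tprod_ident_left:
  assumes "is_tensor a b c B" "0 < c"
  shows "tprod a a b c (ident a c) B = B"
proof (intro ext)
  fix i j l
  show "tprod a a b c (ident a c) B i j l = B i j l"
  proof (cases "i < a \<and> j < b \<and> l < c")
    case False then show ?thesis using assms by (auto simp: tprod_def is_tensor_def)
  next
    case True
    have "tprod a a b c (ident a c) B i j l = (\<Sum>p<a. \<Sum>q<c. if p = i \<and> q = 0 then B p j l else 0)"
      using True assms by (auto simp: tprod_def ident_def intro!: sum.cong)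
    also have "\<dots> = B i j l" using True assms by (simp add: sum_sum_delta)
    finally show ?thesis .
  qed
qed

lemma tprod_ident_right:
  assumes "is_tensor a b c A" "0 < c"
  shows "tprod a b b c A (ident b c) = A"
proof (intro ext)
  fix i j l
  show "tprod a b b c A (ident b c) i j l = A i j l"
  proof (cases "i < a \<and> j < b \<and> l < c")
    case False then show ?thesis using assms by (auto simp: tprod_def is_tensor_def)
  next
    case True
    have "tprod a b b c A (ident b c) i j l = (\<Sum>p<b. \<Sum>q<c. if p = j \<and> q = l then A i p q else 0)"
      using True assms by (auto simp: tprod_def ident_def circ_sub_eq_0_iff intro!: sum.cong)
    also have "\<dots> = A i j l" using True by (simp add: sum_sum_delta)
    finally show ?thesis .
  qed
qed

section \<open>Orthogonal invariance and the t-SVD\<close>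

lemma tinner_tprod_orthogonal_left:
  assumes c: "0 < c" and U: "t_orthogonal a c U" and Z: "is_tensor a b c Z"
  shows "tinner a b c (tprod a a b c U Z) (tprod a a b c U Z) = tinner a b c Z Z"
proof -
  have "tinner a b c (tprod a a b c U Z) (tprod a a b c U Z)
      = tinner a b c Z (tprod a a b c (ctrans a a c U) (tprod a a b c U Z))"
    by (rule tinner_tprod_left[OF c])
  also have "tprod a a b c (ctrans a a c U) (tprod a a b c U Z)
      = tprod a a b c (tprod a a a c (ctrans a a c U) U) Z"
    by (rule tprod_assoc[OF c])
  also have "\<dots> = Z" using U Z c by (simp add: t_orthogonal_def tprod_ident_left)
  finally show ?thesis .
qed

lemma tinner_tprod_ctrans_orthogonal_right:
  assumes c: "0 < c" and V: "t_orthogonal b c V" "is_tensor b b c V" and S: "is_tensor a b c S"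
  shows "tinner a b c (tprod a b b c S (ctrans b b c V)) (tprod a b b c S (ctrans b b c V))
       = tinner a b c S S"
proof -
  have "tinner a b c (tprod a b b c S (ctrans b b c V)) (tprod a b b c S (ctrans b b c V))
     = tinner a b c (tprod a b b c (tprod a b b c S (ctrans b b c V)) (ctrans b b c (ctrans b b c V))) S"
    by (rule tinner_tprod_right[OF c])
  also have "ctrans b b c (ctrans b b c V) = V" using V c by (simp add: ctrans_ctrans)
  also have "tprod a b b c (tprod a b b c S (ctrans b b c V)) V
      = tprod a b b c S (tprod b b b c (ctrans b b c V) V)"
    by (rule tprod_assoc[OF c, symmetric])
  also have "\<dots> = S" using V S c by (simp add: t_orthogonal_def tprod_ident_right)
  finally show ?thesis .
qed

lemma tinner_f_diagonal:
  assumes "f_diagonal S"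
  shows "tinner a b c S S = (\<Sum>j<min a b. \<Sum>l<c. (S j j l)\<^sup>2)"
proof -
  have "\<And>i j. (\<Sum>l<c. S i j l * S i j l) = (if i = j then (\<Sum>l<c. (S i i l)\<^sup>2) else 0)"
    using assms by (auto simp: f_diagonal_def power2_eq_square)
  then have "tinner a b c S S = (\<Sum>i<a. if i < b then (\<Sum>l<c. (S i i l)\<^sup>2) else 0)"
    by (simp add: tinner_def sum.delta')
  also have "\<dots> = (\<Sum>i\<in>{..<a} \<inter> {..<b}. \<Sum>l<c. (S i i l)\<^sup>2)"
    by (simp add: sum.inter_restrict)
  also have "{..<a} \<inter> {..<b} = {..<min a b}" by auto
  finally show ?thesis .
qed

lemma tinner_tsvd:
  assumes c: "0 < c" and sv: "is_tsvd a b c R U S V"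
  shows "tinner a b c R R = (\<Sum>j<min a b. \<Sum>l<c. (S j j l)\<^sup>2)"
proof -
  from sv have U: "t_orthogonal a c U" and S: "is_tensor a b c S" "f_diagonal S"
    and V: "is_tensor b b c V" "t_orthogonal b c V"
    and R: "R = tprod a a b c U (tprod a b b c S (ctrans b b c V))"
    by (auto simp: is_tsvd_def)
  have "tinner a b c R R = tinner a b c (tprod a b b c S (ctrans b b c V)) (tprod a b b c S (ctrans b b c V))"
    unfolding R by (rule tinner_tprod_orthogonal_left[OF c U tprod_is_tensor])
  also have "\<dots> = tinner a b c S S" by (rule tinner_tprod_ctrans_orthogonal_right[OF c V(2,1) S(1)])
  finally show ?thesis by (simp add: tinner_f_diagonal[OF S(2)])
qed

lemma lat_slice_is_tensor: "is_tensor a b c W \<Longrightarrow> 0 < b \<Longrightarrow> is_tensor a 1 c (lat_slice W 0)"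
  by (auto simp: is_tensor_def lat_slice_def)

definition tunit :: tensor where
  "tunit = (\<lambda>i j l. if i = 0 \<and> j = 0 \<and> l = 0 then 1 else 0)"

lemma tprod_lat_slice:
  assumes "0 < a"
  shows "tprod p a 1 c A (lat_slice W 0) = (\<lambda>i j l. if j = 0 then tprod p a a c A W i 0 l else 0)"
  using assms by (auto simp: tprod_def lat_slice_def fun_eq_iff)

lemma ctrans_tprod_lat_slice_orthogonal:
  assumes a: "0 < a" and c: "0 < c" and W: "t_orthogonal a c W"
  shows "tprod a a 1 c (ctrans a a c W) (lat_slice W 0) = tunit"
proof -
  have "tprod a a a c (ctrans a a c W) W = ident a c" using W by (simp add: t_orthogonal_def)
  moreover have "tprod a a 1 c (ctrans a a c W) (lat_slice W 0)
      = (\<lambda>i j l. if j = 0 then tprod a a a c (ctrans a a c W) W i 0 l else 0)"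
    by (rule tprod_lat_slice[OF a])
  ultimately show ?thesis using a c by (auto simp: tunit_def ident_def fun_eq_iff)
qed

lemma lat_slice_orthonormal:
  assumes a: "0 < a" and c: "0 < c" and W: "t_orthogonal a c W"
  shows "tprod 1 a 1 c (ctrans a 1 c (lat_slice W 0)) (lat_slice W 0) = ident 1 c"
proof -
  have e: "tprod a a a c (ctrans a a c W) W = ident a c" using W by (simp add: t_orthogonal_def)
  have "tprod 1 a 1 c (ctrans a 1 c (lat_slice W 0)) (lat_slice W 0) i j l = ident 1 c i j l" for i j l
  proof -
    have "tprod 1 a 1 c (ctrans a 1 c (lat_slice W 0)) (lat_slice W 0) i j l
        = (if i = 0 \<and> j = 0 then tprod a a a c (ctrans a a c W) W 0 0 l else 0)"
      using a c by (auto simp: tprod_def lat_slice_def ctrans_def intro!: sum.cong)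
    then show ?thesis using e a by (simp add: ident_def)
  qed
  then show ?thesis by (intro ext)
qed

lemma tprod_tunit_right:
  assumes "0 < b" "0 < c" "i < a" "l < c"
  shows "tprod a b 1 c S tunit i 0 l = S i 0 l"
proof -
  have "tprod a b 1 c S tunit i 0 l = (\<Sum>p<b. \<Sum>q<c. if p = 0 \<and> q = l then S i p q else 0)"
    using assms by (auto simp: tprod_def tunit_def circ_sub_eq_0_iff intro!: sum.cong)
  also have "\<dots> = S i 0 l" using assms by (simp add: sum_sum_delta)
  finally show ?thesis .
qed

lemma tprod_tunit_left:
  assumes "0 < c" "l < c"
  shows "tprod a 1 1 c tunit T i 0 l = (if i < a \<and> i = 0 then T 0 0 l else 0)"
  using assms by (auto simp: tprod_def tunit_def if_distrib[of "\<lambda>x. x * _"] cong: if_cong)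

lemma tinner_lateral: "tinner a 1 c X Z = (\<Sum>i<a. \<Sum>l<c. X i 0 l * Z i 0 l)"
  by (simp add: tinner_def)

lemma tube_norm_power2: "(tube_norm c S j)\<^sup>2 = (\<Sum>l<c. (S j j l)\<^sup>2)"
  by (simp add: tube_norm_def sum_nonneg)

lemma tinner_tsvd_rank1_term:
  assumes a: "0 < a" and b: "0 < b" and c: "0 < c" and sv: "is_tsvd a b c R U S V"
  shows "tinner a b c R (rank1_term a b c U S V 0) = tube_norm c S 0"
proof -
  from sv have U: "t_orthogonal a c U" and V: "is_tensor b b c V" "t_orthogonal b c V"
    and R: "R = tprod a a b c U (tprod a b b c S (ctrans b b c V))"
    by (auto simp: is_tsvd_def)
  define U0 where "U0 = lat_slice U 0"
  define V0 where "V0 = lat_slice V 0"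
  define tn where "tn = normalized_tube c S 0"
  define Z where "Z = tprod a b b c S (ctrans b b c V)"
  have "tinner a b c R (rank1_term a b c U S V 0)
      = tinner a b c Z (tprod a a b c (ctrans a a c U) (tprod a 1 b c (tprod a 1 1 c U0 tn) (ctrans b 1 c V0)))"
    unfolding R rank1_term_def U0_def V0_def tn_def Z_def by (rule tinner_tprod_left[OF c])
  also have "tprod a a b c (ctrans a a c U) (tprod a 1 b c (tprod a 1 1 c U0 tn) (ctrans b 1 c V0))
      = tprod a 1 b c (tprod a 1 1 c (tprod a a 1 c (ctrans a a c U) U0) tn) (ctrans b 1 c V0)"
    by (simp add: tprod_assoc[OF c])
  also have "tprod a a 1 c (ctrans a a c U) U0 = tunit"
    unfolding U0_def by (rule ctrans_tprod_lat_slice_orthogonal[OF a c U])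
  also have "tinner a b c Z (tprod a 1 b c (tprod a 1 1 c tunit tn) (ctrans b 1 c V0))
      = tinner a 1 c (tprod a b 1 c Z (ctrans 1 b c (ctrans b 1 c V0))) (tprod a 1 1 c tunit tn)"
    by (rule tinner_tprod_right[OF c])
  also have "ctrans 1 b c (ctrans b 1 c V0) = V0"
    unfolding V0_def by (rule ctrans_ctrans[OF lat_slice_is_tensor[OF V(1) b] c])
  also have "tprod a b 1 c Z V0 = tprod a b 1 c S (tprod b b 1 c (ctrans b b c V) V0)"
    unfolding Z_def by (rule tprod_assoc[OF c, symmetric])
  also have "tprod b b 1 c (ctrans b b c V) V0 = tunit"
    unfolding V0_def by (rule ctrans_tprod_lat_slice_orthogonal[OF b c V(2)])
  also have "tinner a 1 c (tprod a b 1 c S tunit) (tprod a 1 1 c tunit tn)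
      = (\<Sum>i<a. \<Sum>l<c. S i 0 l * (if i = 0 then tn 0 0 l else 0))"
    unfolding tinner_lateral using a b c
    by (intro sum.cong refl) (simp add: tprod_tunit_right tprod_tunit_left del: One_nat_def)
  also have "\<dots> = (\<Sum>i<a. if i = 0 then (\<Sum>l<c. S 0 0 l * tn 0 0 l) else 0)"
    by (intro sum.cong refl) auto
  also have "\<dots> = (\<Sum>l<c. S 0 0 l * tn 0 0 l)"
    using a by simp
  also have "\<dots> = (\<Sum>l<c. (S 0 0 l)\<^sup>2) / tube_norm c S 0"
    by (simp add: tn_def normalized_tube_def sum_divide_distrib power2_eq_square)
  also have "\<dots> = (tube_norm c S 0)\<^sup>2 / tube_norm c S 0"
    by (simp only: tube_norm_power2)
  also have "\<dots> = tube_norm c S 0"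
    by (simp add: power2_eq_square)
  finally show ?thesis .
qed

lemma tinner_rank1_term_self_le_1:
  assumes a: "0 < a" and b: "0 < b" and c: "0 < c" and sv: "is_tsvd a b c R U S V"
  shows "tinner a b c (rank1_term a b c U S V 0) (rank1_term a b c U S V 0) \<le> 1"
proof -
  from sv have U: "t_orthogonal a c U" and V: "is_tensor b b c V" "t_orthogonal b c V"
    by (auto simp: is_tsvd_def)
  define U0 where "U0 = lat_slice U 0"
  define V0 where "V0 = lat_slice V 0"
  define tn where "tn = normalized_tube c S 0"
  define W where "W = tprod 1 1 b c tn (ctrans b 1 c V0)"
  have "rank1_term a b c U S V 0 = tprod a 1 b c U0 W"
    unfolding rank1_term_def U0_def V0_def tn_def W_def by (rule tprod_assoc[OF c, symmetric])
  moreover have "tinner a b c (tprod a 1 b c U0 W) (tprod a 1 b c U0 W)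
      = tinner 1 b c W (tprod 1 a b c (ctrans a 1 c U0) (tprod a 1 b c U0 W))"
    by (rule tinner_tprod_left[OF c])
  moreover have "tprod 1 a b c (ctrans a 1 c U0) (tprod a 1 b c U0 W)
      = tprod 1 1 b c (tprod 1 a 1 c (ctrans a 1 c U0) U0) W"
    by (rule tprod_assoc[OF c])
  moreover have "tprod 1 a 1 c (ctrans a 1 c U0) U0 = ident 1 c"
    unfolding U0_def by (rule lat_slice_orthonormal[OF a c U])
  moreover have "tprod 1 1 b c (ident 1 c) W = W"
    by (rule tprod_ident_left[OF _ c]) (simp add: W_def tprod_is_tensor)
  moreover have "tinner 1 b c W W = tinner 1 1 c (tprod 1 b 1 c W (ctrans 1 b c (ctrans b 1 c V0))) tn"
    unfolding W_def by (rule tinner_tprod_right[OF c])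
  moreover have "ctrans 1 b c (ctrans b 1 c V0) = V0"
    unfolding V0_def by (rule ctrans_ctrans[OF lat_slice_is_tensor[OF V(1) b] c])
  moreover have "tprod 1 b 1 c W V0 = tprod 1 1 1 c tn (tprod 1 b 1 c (ctrans b 1 c V0) V0)"
    unfolding W_def by (rule tprod_assoc[OF c, symmetric])
  moreover have "tprod 1 b 1 c (ctrans b 1 c V0) V0 = ident 1 c"
    unfolding V0_def by (rule lat_slice_orthonormal[OF b c V(2)])
  moreover have "tprod 1 1 1 c tn (ident 1 c) = tn"
    by (rule tprod_ident_right[OF _ c]) (auto simp: tn_def normalized_tube_def is_tensor_def)
  ultimately have "tinner a b c (rank1_term a b c U S V 0) (rank1_term a b c U S V 0) = tinner 1 1 c tn tn"
    by simp
  also have "\<dots> = (\<Sum>l<c. (S 0 0 l)\<^sup>2) / (tube_norm c S 0)\<^sup>2"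
    by (simp add: tinner_def tn_def normalized_tube_def sum_divide_distrib power2_eq_square)
  also have "\<dots> = (tube_norm c S 0)\<^sup>2 / (tube_norm c S 0)\<^sup>2"
    by (simp only: tube_norm_power2)
  also have "\<dots> \<le> 1" by simp
  finally show ?thesis .
qed

lemma sum_cis_roots_of_unity:
  assumes c: "0 < c" and q: "q < c" and q': "q' < c"
  shows "(\<Sum>l<c. cis (2 * pi * real l * (real q' - real q) / real c)) = (if q = q' then of_nat c else 0)"
proof (cases "q = q'")
  case True then show ?thesis by simp
next
  case False
  define w where "w = cis (2 * pi * (real q' - real q) / real c)"
  have pw: "cis (2 * pi * real l * (real q' - real q) / real c) = w ^ l" for l
    by (simp add: w_def DeMoivre mult.commute mult.left_commute)
  have "w ^ c = cis (2 * pi * (real q' - real q))" using c by (simp add: w_def DeMoivre)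
  also have "\<dots> = 1" by (rule cis_multiple_2pi) (simp add: Ints_diff)
  finally have wc: "w ^ c = 1" .
  have w1: "w \<noteq> 1"
  proof
    assume "w = 1"
    then have "cos (2 * pi * (real q' - real q) / real c) = 1"
      by (metis Re_complex_of_real cis.sel(1) one_complex.sel(1) w_def)
    then obtain n :: int where "2 * pi * (real q' - real q) / real c = n * 2 * pi"
      by (auto simp: cos_one_2pi_int)
    then have "pi * (2 * (real q' - real q)) = pi * (2 * (n * real c))" using c by (simp add: field_simps)
    then have "real q' - real q = n * real c" by simp
    then have e: "int q' - int q = n * int c"
      by (metis of_int_eq_iff of_int_mult of_int_of_nat_eq of_int_diff)
    have "\<bar>int q' - int q\<bar> < int c" using q q' by simp
    moreover have "n \<noteq> 0" using e False by auto
    then have "\<bar>n * int c\<bar> \<ge> int c" using c by (simp add: abs_mult)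
    ultimately show False using e by simp
  qed
  have "(\<Sum>l<c. cis (2 * pi * real l * (real q' - real q) / real c)) = (\<Sum>l<c. w ^ l)"
    by (simp add: pw)
  also have "\<dots> = 0" using w1 wc by (simp add: geometric_sum)
  finally show ?thesis using False by simp
qed

lemma dft3_parseval:
  assumes c: "0 < c"
  shows "(\<Sum>l<c. (cmod (dft3 c X i j l))\<^sup>2) = real c * (\<Sum>q<c. (X i j q)\<^sup>2)"
proof -
  let ?e = "\<lambda>l q q'. cis (2 * pi * real l * (real q' - real q) / real c)"
  let ?a = "\<lambda>l q. complex_of_real (X i j q) * cis (- 2 * pi * real l * real q / real c)"
  have dft_product: "?a l q * cnj (?a l q') = complex_of_real (X i j q * X i j q') * ?e l q q'" for l q q'
  proof -
    have "cis (- 2 * pi * real l * real q / real c) * cis (- (- 2 * pi * real l * real q' / real c))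
        = ?e l q q'"
      by (simp add: cis_mult algebra_simps add_divide_distrib[symmetric] diff_divide_distrib[symmetric])
    then show ?thesis by (simp add: cis_cnj)
  qed
  have "complex_of_real (\<Sum>l<c. (cmod (dft3 c X i j l))\<^sup>2) = (\<Sum>l<c. dft3 c X i j l * cnj (dft3 c X i j l))"
    by (simp only: of_real_sum complex_norm_square)
  also have "\<dots> = (\<Sum>l<c. \<Sum>q<c. \<Sum>q'<c. ?a l q * cnj (?a l q'))"
    by (intro sum.cong refl) (simp add: dft3_def sum_product)
  also have "\<dots> = (\<Sum>l<c. \<Sum>q<c. \<Sum>q'<c. complex_of_real (X i j q * X i j q') * ?e l q q')"
    by (simp only: dft_product)
  also have "\<dots> = (\<Sum>q<c. \<Sum>q'<c. \<Sum>l<c. complex_of_real (X i j q * X i j q') * ?e l q q')"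
    by (subst sum.swap) (rule sum.cong[OF refl], rule sum.swap)
  also have "\<dots> = (\<Sum>q<c. \<Sum>q'<c. if q = q' then complex_of_real (X i j q * X i j q') * of_nat c else 0)"
    using c by (intro sum.cong refl) (simp add: sum_cis_roots_of_unity flip: sum_distrib_left)
  also have "\<dots> = complex_of_real (real c * (\<Sum>q<c. (X i j q)\<^sup>2))"
    by (simp add: sum.delta sum_distrib_left power2_eq_square mult.commute)
  finally show ?thesis by (simp only: of_real_eq_iff)
qed

text \<open>The singular values in each Fourier slice are ordered, so by Parseval the first singular
  tube has the largest Frobenius norm.\<close>

lemma tsvd_tube_le_first:
  assumes c: "0 < c" and sv: "is_tsvd a b c R U S V" and j: "j < min a b"
  shows "(\<Sum>l<c. (S j j l)\<^sup>2) \<le> (\<Sum>l<c. (S 0 0 l)\<^sup>2)"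
proof -
  from sv have nn: "\<And>l j. l < c \<Longrightarrow> j < min a b \<Longrightarrow> Im (dft3 c S j j l) = 0 \<and> 0 \<le> Re (dft3 c S j j l)"
    and mono: "\<And>l j. l < c \<Longrightarrow> Suc j < min a b \<Longrightarrow> Re (dft3 c S (Suc j) (Suc j) l) \<le> Re (dft3 c S j j l)"
    by (auto simp: is_tsvd_def)
  have le: "Re (dft3 c S j j l) \<le> Re (dft3 c S 0 0 l)" if "l < c" "j < min a b" for l j
    using that(2)
  proof (induction j)
    case (Suc j) then show ?case using mono[OF that(1), of j] by simp
  qed simp
  have "(\<Sum>l<c. (cmod (dft3 c S j j l))\<^sup>2) \<le> (\<Sum>l<c. (cmod (dft3 c S 0 0 l))\<^sup>2)"
  proof (rule sum_mono)
    fix l assume "l \<in> {..<c}"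
    then have l: "l < c" by simp
    have j0: "0 < min a b" using j by simp
    show "(cmod (dft3 c S j j l))\<^sup>2 \<le> (cmod (dft3 c S 0 0 l))\<^sup>2"
      using nn[OF l j] nn[OF l j0] le[OF l j] by (simp add: cmod_power2 power_mono)
  qed
  then show ?thesis using c by (simp add: dft3_parseval[OF c])
qed

lemma tinner_tsvd_le_first_tube:
  assumes c: "0 < c" and sv: "is_tsvd a b c R U S V"
  shows "tinner a b c R R \<le> real (min a b) * (tube_norm c S 0)\<^sup>2"
proof -
  have "tinner a b c R R = (\<Sum>j<min a b. \<Sum>l<c. (S j j l)\<^sup>2)" by (rule tinner_tsvd[OF c sv])
  also have "\<dots> \<le> (\<Sum>j<min a b. \<Sum>l<c. (S 0 0 l)\<^sup>2)"
    by (rule sum_mono) (rule tsvd_tube_le_first[OF c sv], simp)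
  finally show ?thesis by (simp add: tube_norm_power2)
qed

section \<open>Vectorisation and the projector\<close>

lemma tensor_index_2d_less: "i < a \<Longrightarrow> j < b \<Longrightarrow> i + a * j < a * (b::nat)"
proof -
  assume "i < a" "j < b"
  then have "i + a * j < a * (j + 1)" by simp
  also have "\<dots> \<le> a * b" using \<open>j < b\<close> by (intro mult_le_mono2) simp
  finally show ?thesis .
qed

lemma tensor_index_facts:
  fixes a b c i j l :: nat
  assumes "i < a" "j < b" "l < c"
  shows "i + a * j + a * b * l < a * b * c"
    and "(i + a * j + a * b * l) mod a = i"
    and "((i + a * j + a * b * l) div a) mod b = j"
    and "(i + a * j + a * b * l) div (a * b) = l"
proof -
  have ij: "i + a * j < a * b" using assms(1,2) by (rule tensor_index_2d_less)
  have "i + a * j + a * b * l < a * b * (l + 1)" using ij by (simp add: algebra_simps)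
  also have "\<dots> \<le> a * b * c" using assms by (intro mult_le_mono2) simp
  finally show "i + a * j + a * b * l < a * b * c" .
  have e1: "i + a * j + a * b * l = i + a * (j + b * l)" by (simp add: algebra_simps)
  show "(i + a * j + a * b * l) mod a = i" using assms by (simp add: e1)
  show "((i + a * j + a * b * l) div a) mod b = j" using assms by (simp add: e1)
  have ab: "a * b \<noteq> 0" using assms by auto
  have "(i + a * j + a * b * l) div (a * b) = l + (i + a * j) div (a * b)"
    using div_mult_self2[OF ab, of "i + a * j" l] by simp
  then show "(i + a * j + a * b * l) div (a * b) = l" using ij by simp
qed

lemma tensor_index_decompose:
  fixes a b t :: nat
  shows "t mod a + a * ((t div a) mod b) + a * b * (t div (a * b)) = t"
proof -
  have "t div (a * b) = (t div a) div b" by (simp add: div_mult2_eq)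
  then have "a * ((t div a) mod b) + a * b * (t div (a * b)) = a * (t div a)"
    by (metis add_mult_distrib2 mult.assoc mod_mult_div_eq)
  then show ?thesis by (metis add.assoc mod_mult_div_eq)
qed

lemma tensor_index_range:
  fixes a b c t :: nat
  assumes "t < a * b * c"
  shows "t mod a < a" "(t div a) mod b < b" "t div (a * b) < c"
proof -
  have "0 < a" "0 < b" using assms by (auto intro: gr0I)
  then show "t mod a < a" "(t div a) mod b < b" by simp_all
  show "t div (a * b) < c"
    using assms by (simp add: less_mult_imp_div_less mult.commute mult.left_commute)
qed

lemma tvec_index: "i < a \<Longrightarrow> j < b \<Longrightarrow> l < c \<Longrightarrow> tvec a b c X (i + a * j + a * b * l) = X i j l"
  unfolding tvec_def by (simp only: tensor_index_facts if_True)

lemma tvec_tunvec: "tvec a b c (tunvec a b c v) t = (if t < a * b * c then v t else 0)"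
  by (auto simp: tvec_def tunvec_def tensor_index_range tensor_index_decompose)

lemma sum_tensor_index:
  fixes f :: "nat \<Rightarrow> real"
  shows "(\<Sum>i<a. \<Sum>j<b. \<Sum>l<c. f (i + a * j + a * b * l)) = (\<Sum>t<a * b * c. f t)"
proof -
  have "(\<Sum>i<a. \<Sum>j<b. \<Sum>l<c. f (i + a * j + a * b * l))
      = (\<Sum>(i,j,l)\<in>{..<a}\<times>{..<b}\<times>{..<c}. f (i + a * j + a * b * l))"
    by (simp add: sum.cartesian_product)
  also have "\<dots> = (\<Sum>t<a * b * c. f t)"
    by (rule sum.reindex_bij_witness[where j = "\<lambda>(i,j,l). i + a * j + a * b * l"
                                       and i = "\<lambda>t. (t mod a, (t div a) mod b, t div (a * b))"])
       (auto simp: tensor_index_facts tensor_index_decompose tensor_index_range tensor_index_2d_less)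
  finally show ?thesis .
qed

lemma tinner_tvec: "tinner a b c X Z = (\<Sum>t<a * b * c. tvec a b c X t * tvec a b c Z t)"
proof -
  have "tinner a b c X Z
      = (\<Sum>i<a. \<Sum>j<b. \<Sum>l<c. tvec a b c X (i + a * j + a * b * l) * tvec a b c Z (i + a * j + a * b * l))"
    unfolding tinner_def by (intro sum.cong refl) (simp add: tvec_index)
  also have "\<dots> = (\<Sum>t<a * b * c. tvec a b c X t * tvec a b c Z t)" by (rule sum_tensor_index)
  finally show ?thesis .
qed

definition proj_matrix :: "nat \<Rightarrow> nat \<Rightarrow> rmat \<Rightarrow> rmat \<Rightarrow> rmat" where
  "proj_matrix N m phi phiinv = mmul N m N phiinv phi"

lemma tvec_proj_op:
  "tvec a b c (proj_op a b c m phi phiinv X) t =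
     (if t < a * b * c then (\<Sum>s<a * b * c. proj_matrix (a * b * c) m phi phiinv t s * tvec a b c X s) else 0)"
  by (simp add: proj_op_def Phi_inv_op_def Phi_op_def tvec_tunvec mvmul_def proj_matrix_def mmul_def
      sum_distrib_left sum_distrib_right mult.assoc sum.swap[where A="{..<m}"])

lemma proj_op_eq_sum:
  "proj_op a b c m phi phiinv X = (\<lambda>x y z. if x < a \<and> y < b \<and> z < c then
     (\<Sum>s<a * b * c. proj_matrix (a * b * c) m phi phiinv (x + a * y + a * b * z) s * tvec a b c X s) else 0)"
proof (intro ext)
  fix x y z
  show "proj_op a b c m phi phiinv X x y z = (if x < a \<and> y < b \<and> z < c then
     (\<Sum>s<a * b * c. proj_matrix (a * b * c) m phi phiinv (x + a * y + a * b * z) s * tvec a b c X s) else 0)"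
  proof (cases "x < a \<and> y < b \<and> z < c")
    case True
    then have "proj_op a b c m phi phiinv X x y z = tvec a b c (proj_op a b c m phi phiinv X) (x + a * y + a * b * z)"
      by (simp add: tvec_index)
    then show ?thesis using True tensor_index_facts(1)[of x a y b z c] by (simp add: tvec_proj_op)
  qed (auto simp: proj_op_def Phi_inv_op_def tunvec_def)
qed

lemma proj_matrix_idem:
  assumes mp: "is_mp_inverse m N phi phiinv" and t: "t < N" and u: "u < N"
  shows "(\<Sum>s<N. proj_matrix N m phi phiinv t s * proj_matrix N m phi phiinv s u) = proj_matrix N m phi phiinv t u"
proof -
  let ?K = "proj_matrix N m phi phiinv"
  have BAB: "mmul N N m (mmul N m N phiinv phi) phiinv = phiinv" using mp by (simp add: is_mp_inverse_def)
  have "(\<Sum>s<N. ?K t s * ?K s u) = (\<Sum>s<N. ?K t s * (\<Sum>k<m. phiinv s k * phi k u))"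
    using t u by (simp add: proj_matrix_def mmul_def)
  also have "\<dots> = (\<Sum>k<m. (\<Sum>s<N. ?K t s * phiinv s k) * phi k u)"
    by (simp add: sum_distrib_left sum_distrib_right mult.assoc sum.swap[where A="{..<N}"])
  also have "\<dots> = (\<Sum>k<m. phiinv t k * phi k u)"
  proof (intro sum.cong refl)
    fix k assume "k \<in> {..<m}"
    then have "(\<Sum>s<N. ?K t s * phiinv s k) = mmul N N m (mmul N m N phiinv phi) phiinv t k"
      using t by (simp add: proj_matrix_def mmul_def)
    then show "(\<Sum>s<N. ?K t s * phiinv s k) * phi k u = phiinv t k * phi k u"
      using BAB by simp
  qed
  also have "\<dots> = ?K t u" using t u by (simp add: proj_matrix_def mmul_def)
  finally show ?thesis .
qed

lemma proj_op_idem: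
  assumes mp: "is_mp_inverse m (a * b * c) phi phiinv"
  shows "proj_op a b c m phi phiinv (proj_op a b c m phi phiinv X) = proj_op a b c m phi phiinv X"
proof -
  let ?N = "a * b * c" and ?K = "proj_matrix (a * b * c) m phi phiinv" and ?P = "proj_op a b c m phi phiinv"
  have "(\<Sum>s<?N. ?K t s * tvec a b c (?P X) s) = (\<Sum>u<?N. ?K t u * tvec a b c X u)"
    if t: "t < ?N" for t
  proof -
    have "(\<Sum>s<?N. ?K t s * tvec a b c (?P X) s) = (\<Sum>s<?N. ?K t s * (\<Sum>u<?N. ?K s u * tvec a b c X u))"
      by (intro sum.cong refl) (simp add: tvec_proj_op)
    also have "\<dots> = (\<Sum>u<?N. (\<Sum>s<?N. ?K t s * ?K s u) * tvec a b c X u)"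
      by (simp only: sum_distrib_left sum_distrib_right mult.assoc) (rule sum.swap)
    also have "\<dots> = (\<Sum>u<?N. ?K t u * tvec a b c X u)"
      using t by (simp add: proj_matrix_idem[OF mp])
    finally show ?thesis .
  qed
  then show ?thesis by (simp add: proj_op_eq_sum[of a b c m phi phiinv "?P X"] tensor_index_facts(1)
      flip: proj_op_eq_sum[of a b c m phi phiinv X] cong: if_cong)
qed

lemma tinner_proj_op_commute:
  assumes mp: "is_mp_inverse m (a * b * c) phi phiinv"
  shows "tinner a b c (proj_op a b c m phi phiinv X) Z = tinner a b c X (proj_op a b c m phi phiinv Z)"
proof -
  let ?N = "a * b * c" and ?K = "proj_matrix (a * b * c) m phi phiinv"
  have sym: "?K t s = ?K s t" for t s using mp by (simp add: is_mp_inverse_def proj_matrix_def)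
  have "tinner a b c (proj_op a b c m phi phiinv X) Z
      = (\<Sum>t<?N. \<Sum>s<?N. ?K t s * tvec a b c X s * tvec a b c Z t)"
    by (simp add: tinner_tvec tvec_proj_op sum_distrib_right mult.assoc)
  also have "\<dots> = (\<Sum>s<?N. \<Sum>t<?N. ?K s t * tvec a b c Z t * tvec a b c X s)"
    by (subst sum.swap) (intro sum.cong refl, subst sym, simp add: mult_ac)
  also have "\<dots> = tinner a b c X (proj_op a b c m phi phiinv Z)"
    by (simp add: tinner_tvec tvec_proj_op sum_distrib_left sum_distrib_right mult_ac)
  finally show ?thesis .
qed

lemma tinner_proj_op_self_le:
  assumes mp: "is_mp_inverse m (a * b * c) phi phiinv"
  shows "tinner a b c (proj_op a b c m phi phiinv M) (proj_op a b c m phi phiinv M) \<le> tinner a b c M M"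
proof -
  let ?P = "proj_op a b c m phi phiinv"
  have PM: "tinner a b c (?P M) (?P M) = tinner a b c M (?P M)"
    using tinner_proj_op_commute[OF mp, of M "?P M"] proj_op_idem[OF mp, of M] by simp
  have "0 \<le> tinner a b c (\<lambda>x y z. M x y z - 1 * ?P M x y z) (\<lambda>x y z. M x y z - 1 * ?P M x y z)"
    by (rule tinner_self_nonneg)
  also have "\<dots> = tinner a b c M M - tinner a b c (?P M) (?P M)"
    by (simp only: tinner_diff_scale_self PM) simp
  finally show ?thesis by simp
qed

lemma proj_op_zero: "proj_op a b c m phi phiinv zero_tensor = zero_tensor"
  by (simp add: proj_op_eq_sum tvec_def zero_tensor_def fun_eq_iff)

lemma proj_op_tdiff:
  "proj_op a b c m phi phiinv (tdiff X Z) = tdiff (proj_op a b c m phi phiinv X) (proj_op a b c m phi phiinv Z)"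
  by (auto simp: proj_op_eq_sum tvec_def tdiff_def fun_eq_iff right_diff_distrib sum_subtractf)

lemma proj_op_scale:
  "proj_op a b c m phi phiinv (\<lambda>x y z. u * X x y z) = (\<lambda>x y z. u * proj_op a b c m phi phiinv X x y z)"
  by (auto simp: proj_op_eq_sum tvec_def fun_eq_iff sum_distrib_left mult_ac)

lemma proj_op_add:
  "proj_op a b c m phi phiinv (\<lambda>x y z. X x y z + Z x y z)
     = (\<lambda>x y z. proj_op a b c m phi phiinv X x y z + proj_op a b c m phi phiinv Z x y z)"
  by (auto simp: proj_op_eq_sum tvec_def fun_eq_iff distrib_left sum.distrib)

lemma proj_op_sum:
  "proj_op a b c m phi phiinv (\<lambda>x y z. \<Sum>i\<in>I. F i x y z)
     = (\<lambda>x y z. \<Sum>i\<in>I. proj_op a b c m phi phiinv (F i) x y z)"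
  by (auto simp: proj_op_eq_sum tvec_def fun_eq_iff sum_distrib_left intro: sum.swap)

section \<open>Contraction of the residuals\<close>

lemma tinner_greedy_step_le:
  assumes a: "0 < a" and b: "0 < b" and c: "0 < c"
    and mp: "is_mp_inverse m (a * b * c) phi phiinv"
    and sv: "is_tsvd a b c R U S V"
    and fixed: "proj_op a b c m phi phiinv R = R"
    and opt: "tinner a b c R' R' \<le> tinner a b c
        (\<lambda>x y z. R x y z - tube_norm c S 0 * proj_op a b c m phi phiinv (rank1_term a b c U S V 0) x y z)
        (\<lambda>x y z. R x y z - tube_norm c S 0 * proj_op a b c m phi phiinv (rank1_term a b c U S V 0) x y z)"
  shows "tinner a b c R' R' \<le> (1 - 1 / real (min a b)) * tinner a b c R R"
proof -
  let ?P = "proj_op a b c m phi phiinv"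
  define M where "M = rank1_term a b c U S V 0"
  define \<sigma> where "\<sigma> = tube_norm c S 0"
  have "tinner a b c R (?P M) = tinner a b c (?P R) M" by (rule tinner_proj_op_commute[OF mp, symmetric])
  also have "\<dots> = \<sigma>" unfolding fixed M_def \<sigma>_def by (rule tinner_tsvd_rank1_term[OF a b c sv])
  finally have inner: "tinner a b c R (?P M) = \<sigma>" .
  have "tinner a b c (?P M) (?P M) \<le> 1"
    using tinner_proj_op_self_le[OF mp, of M] tinner_rank1_term_self_le_1[OF a b c sv]
    unfolding M_def by linarith
  then have "\<sigma>\<^sup>2 * tinner a b c (?P M) (?P M) \<le> \<sigma>\<^sup>2" by (simp add: mult_left_le)
  with opt have "tinner a b c R' R' \<le> tinner a b c R R - \<sigma>\<^sup>2"
    unfolding M_def[symmetric] \<sigma>_def[symmetric] tinner_diff_scale_self inner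
    by (simp add: power2_eq_square)
  moreover have "tinner a b c R R / real (min a b) \<le> \<sigma>\<^sup>2"
    using tinner_tsvd_le_first_tube[OF c sv] a b unfolding \<sigma>_def by (simp add: divide_le_eq mult.commute)
  ultimately show ?thesis by (simp add: algebra_simps)
qed

lemma power_bound_of_contraction:
  fixes f :: "nat \<Rightarrow> real"
  assumes "0 \<le> \<rho>" and contract: "\<And>k. 1 \<le> k \<Longrightarrow> k \<le> N \<Longrightarrow> f (Suc k) \<le> \<rho> * f k"
    and "1 \<le> k" "k \<le> Suc N"
  shows "f k \<le> \<rho> ^ (k - 1) * f 1"
  using assms(3,4)
proof (induction k rule: dec_induct)
  case (step k)
  then have "f (Suc k) \<le> \<rho> * f k" by (intro contract) auto
  also have "\<dots> \<le> \<rho> * (\<rho> ^ (k - 1) * f 1)" using step \<open>0 \<le> \<rho>\<close> by (intro mult_left_mono) auto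
  also have "\<dots> = \<rho> ^ (Suc k - 1) * f 1" using step.hyps by (cases k) auto
  finally show ?case .
qed simp

lemma sum_if_0_mult: "0 < (s::nat) \<Longrightarrow> (\<Sum>j<s. (if j = 0 then u else 0) * f j) = (u::real) * f 0"
  by (simp add: if_distrib[of "\<lambda>x. x * _"] sum.delta cong: if_cong)

lemma proj_op_std_comb:
  assumes "is_mp_inverse m (a * b * c) phi phiinv"
  shows "proj_op a b c m phi phiinv (std_comb k s (proj_op a b c m phi phiinv) M th)
       = std_comb k s (proj_op a b c m phi phiinv) M th"
  unfolding std_comb_def by (simp add: proj_op_sum proj_op_scale proj_op_idem[OF assms])

lemma proj_op_econ_comb:
  assumes "is_mp_inverse m (a * b * c) phi phiinv" and "proj_op a b c m phi phiinv X = X"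
  shows "proj_op a b c m phi phiinv (econ_comb s (proj_op a b c m phi phiinv) X M al)
       = econ_comb s (proj_op a b c m phi phiinv) X M al"
  unfolding econ_comb_def by (simp add: proj_op_add proj_op_sum proj_op_scale proj_op_idem[OF assms(1)] assms(2))

context
  fixes n1 n2 n3 m s N :: nat and phi phiinv :: rmat and Y :: tensor
    and R X U S V :: "nat \<Rightarrow> tensor"
    and th :: "nat \<Rightarrow> nat \<Rightarrow> nat \<Rightarrow> real" and al :: "nat \<Rightarrow> nat \<Rightarrow> real" and econ :: bool
  assumes dims: "0 < n1" "0 < n2" "0 < n3"
    and phiinv: "is_mp_inverse m (n1 * n2 * n3) phi phiinv"
    and s: "1 \<le> s"
    and run: "lrap_run econ n1 n2 n3 m phi phiinv Y s N R X U S V th al"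
begin

lemma lrap_run_iteration:
  assumes "1 \<le> k" "k \<le> N"
  shows "is_tsvd n1 n2 n3 (R k) (U k) (S k) (V k)"
    and "econ \<Longrightarrow> X k = econ_comb s (proj_op n1 n2 n3 m phi phiinv) (X (k - 1))
                            (\<lambda>j. rank1_term n1 n2 n3 (U k) (S k) (V k) j) (al k)"
    and "econ \<Longrightarrow> (fro n1 n2 n3 (tdiff (X k) (proj_op n1 n2 n3 m phi phiinv Y)))\<^sup>2
          \<le> (fro n1 n2 n3 (tdiff (econ_comb s (proj_op n1 n2 n3 m phi phiinv) (X (k - 1))
                (\<lambda>j. rank1_term n1 n2 n3 (U k) (S k) (V k) j) al') (proj_op n1 n2 n3 m phi phiinv Y)))\<^sup>2"
    and "\<not> econ \<Longrightarrow> X k = std_comb k s (proj_op n1 n2 n3 m phi phiinv)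
                            (\<lambda>i j. rank1_term n1 n2 n3 (U i) (S i) (V i) j) (th k)"
    and "\<not> econ \<Longrightarrow> (fro n1 n2 n3 (tdiff (X k) (proj_op n1 n2 n3 m phi phiinv Y)))\<^sup>2
          \<le> (fro n1 n2 n3 (tdiff (std_comb k s (proj_op n1 n2 n3 m phi phiinv)
                (\<lambda>i j. rank1_term n1 n2 n3 (U i) (S i) (V i) j) th') (proj_op n1 n2 n3 m phi phiinv Y)))\<^sup>2"
    and "R (Suc k) = tdiff (proj_op n1 n2 n3 m phi phiinv Y) (X k)"
  using run assms unfolding lrap_run_def Let_def by (auto split: if_splits)

lemma lrap_run_start: "R 1 = proj_op n1 n2 n3 m phi phiinv Y" "X 0 = zero_tensor"
  using run unfolding lrap_run_def Let_def by blast+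

lemma lrap_run_iterate_fixed:
  "k \<le> N \<Longrightarrow> proj_op n1 n2 n3 m phi phiinv (X k) = X k"
proof (induction k)
  case 0 then show ?case by (simp add: lrap_run_start proj_op_zero)
next
  case (Suc k) then show ?case
    by (cases econ) (simp_all add: lrap_run_iteration proj_op_econ_comb proj_op_std_comb phiinv)
qed

lemma lrap_run_residual:
  assumes "1 \<le> k" "k \<le> Suc N"
  shows "R k = tdiff (proj_op n1 n2 n3 m phi phiinv Y) (X (k - 1))"
proof (cases "k = 1")
  case True then show ?thesis using lrap_run_start by (simp add: tdiff_def zero_tensor_def)
next
  case False
  then show ?thesis using lrap_run_iteration(6)[of "k - 1"] assms by simp
qed

lemma lrap_run_residual_fixed:
  "1 \<le> k \<Longrightarrow> k \<le> Suc N \<Longrightarrow> proj_op n1 n2 n3 m phi phiinv (R k) = R k"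
  by (simp add: lrap_run_residual proj_op_tdiff proj_op_idem[OF phiinv] lrap_run_iterate_fixed)

lemma lrap_run_std_iterate:
  "\<not> econ \<Longrightarrow> k \<le> N \<Longrightarrow>
     std_comb k s (proj_op n1 n2 n3 m phi phiinv) (\<lambda>i j. rank1_term n1 n2 n3 (U i) (S i) (V i) j) (th k)
       = X k"
  using lrap_run_iteration(4)[of k] lrap_run_start(2)
  by (cases "k = 0") (auto simp: std_comb_def zero_tensor_def)

text \<open>Both versions may extend the previous fit X_{k-1} by the greedy term sigma P(M_{k,1})
  (index 0 here), so their least-squares fit is at least as good.\<close>

lemma lrap_run_fit_le_greedy:
  assumes k: "1 \<le> k" "k \<le> N"
  defines "G \<equiv> \<lambda>x y z. X (k - 1) x y z + tube_norm n3 (S k) 0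
                 * proj_op n1 n2 n3 m phi phiinv (rank1_term n1 n2 n3 (U k) (S k) (V k) 0) x y z"
  shows "(fro n1 n2 n3 (tdiff (X k) (proj_op n1 n2 n3 m phi phiinv Y)))\<^sup>2
       \<le> (fro n1 n2 n3 (tdiff G (proj_op n1 n2 n3 m phi phiinv Y)))\<^sup>2"
proof (cases econ)
  case True
  define al' where "al' = (\<lambda>j::nat. if j = 0 then 1 else if j = 1 then tube_norm n3 (S k) 0 else 0)"
  have "econ_comb s (proj_op n1 n2 n3 m phi phiinv) (X (k - 1))
          (\<lambda>j. rank1_term n1 n2 n3 (U k) (S k) (V k) j) al' = G"
    using s by (simp add: econ_comb_def G_def al'_def sum_if_0_mult cong: if_cong)
  then show ?thesis using lrap_run_iteration(3)[OF k True, of al'] by simp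
next
  case False
  let ?P = "proj_op n1 n2 n3 m phi phiinv"
  let ?M = "\<lambda>i j. rank1_term n1 n2 n3 (U i) (S i) (V i) j"
  define th' where "th' = (\<lambda>i j::nat. if i = k then (if j = 0 then tube_norm n3 (S k) 0 else 0)
                                       else th (k - 1) i j)"
  have "(\<Sum>i\<in>{1..k - 1}. \<Sum>j<s. th' i j * ?P (?M i j) x y z) = X (k - 1) x y z" for x y z
  proof -
    have "(\<Sum>i\<in>{1..k - 1}. \<Sum>j<s. th' i j * ?P (?M i j) x y z)
        = (\<Sum>i\<in>{1..k - 1}. \<Sum>j<s. th (k - 1) i j * ?P (?M i j) x y z)"
      using k by (intro sum.cong refl) (auto simp: th'_def)
    also have "\<dots> = X (k - 1) x y z"
      using lrap_run_std_iterate[OF False, of "k - 1"] k by (simp add: std_comb_def fun_eq_iff)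
    finally show ?thesis .
  qed
  moreover have "{1..k} = insert k {1..k - 1}" using k by auto
  ultimately have "std_comb k s ?P ?M th' = G"
    using s k by (simp add: std_comb_def G_def th'_def sum_if_0_mult fun_eq_iff)
  then show ?thesis using lrap_run_iteration(5)[OF k False, of th'] by simp
qed

lemma lrap_run_greedy_bound:
  assumes k: "1 \<le> k" "k \<le> N"
  shows "tinner n1 n2 n3 (R (Suc k)) (R (Suc k))
    \<le> tinner n1 n2 n3
        (\<lambda>x y z. R k x y z - tube_norm n3 (S k) 0
                   * proj_op n1 n2 n3 m phi phiinv (rank1_term n1 n2 n3 (U k) (S k) (V k) 0) x y z)
        (\<lambda>x y z. R k x y z - tube_norm n3 (S k) 0
                   * proj_op n1 n2 n3 m phi phiinv (rank1_term n1 n2 n3 (U k) (S k) (V k) 0) x y z)"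
    (is "_ \<le> tinner n1 n2 n3 ?D ?D")
proof -
  let ?P = "proj_op n1 n2 n3 m phi phiinv"
  define G where "G = (\<lambda>x y z. X (k - 1) x y z + tube_norm n3 (S k) 0
                 * ?P (rank1_term n1 n2 n3 (U k) (S k) (V k) 0) x y z)"
  have "tinner n1 n2 n3 (R (Suc k)) (R (Suc k)) = (fro n1 n2 n3 (tdiff (X k) (?P Y)))\<^sup>2"
    by (simp add: lrap_run_iteration(6)[OF k] fro_power2 tinner_tdiff_commute)
  also have "\<dots> \<le> (fro n1 n2 n3 (tdiff G (?P Y)))\<^sup>2"
    unfolding G_def by (rule lrap_run_fit_le_greedy[OF k])
  also have "(fro n1 n2 n3 (tdiff G (?P Y)))\<^sup>2 = tinner n1 n2 n3 (tdiff (?P Y) G) (tdiff (?P Y) G)"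
    by (simp add: fro_power2 tinner_tdiff_commute[of _ _ _ G])
  also have "tdiff (?P Y) G = ?D"
    using k by (simp add: lrap_run_residual G_def tdiff_def fun_eq_iff)
  finally show ?thesis .
qed

lemma lrap_run_residual_contracts:
  assumes k: "1 \<le> k" "k \<le> N"
  shows "fro n1 n2 n3 (R (Suc k)) \<le> sqrt (1 - 1 / real (min n1 n2)) * fro n1 n2 n3 (R k)"
proof -
  have "tinner n1 n2 n3 (R (Suc k)) (R (Suc k)) \<le> (1 - 1 / real (min n1 n2)) * tinner n1 n2 n3 (R k) (R k)"
    using k by (intro tinner_greedy_step_le[OF dims phiinv lrap_run_iteration(1)[OF k]
        lrap_run_residual_fixed lrap_run_greedy_bound]) auto
  then show ?thesis by (metis fro_eq_sqrt_tinner real_sqrt_le_mono real_sqrt_mult)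
qed

end

theorem theorem3p1:
  fixes n1 n2 n3 m r s N :: nat
    and phi phiinv :: rmat and Y :: tensor
    and R X U S V :: "nat \<Rightarrow> tensor"
    and th :: "nat \<Rightarrow> nat \<Rightarrow> nat \<Rightarrow> real" and al :: "nat \<Rightarrow> nat \<Rightarrow> real"
    and econ :: bool
  assumes dims: "0 < n1" "0 < n2" "0 < n3"
    and Y: "is_tensor n1 n2 n3 Y" "tubal_rank_le n1 n2 n3 Y r"
    and phi: "is_matrix m (n1 * n2 * n3) phi" "full_row_rank m (n1 * n2 * n3) phi"
    and phiinv: "is_mp_inverse m (n1 * n2 * n3) phi phiinv"
    and s: "1 \<le> s"
    and N: "N \<le> nat \<lceil>real r / real s\<rceil>"
    and run: "lrap_run econ n1 n2 n3 m phi phiinv Y s N R X U S V th al"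
  shows "\<forall>k. 1 \<le> k \<and> k \<le> Suc N \<longrightarrow>
           fro n1 n2 n3 (R k)
             \<le> sqrt (1 - 1 / real (min n1 n2)) ^ (k - 1)
                * fro n1 n2 n3 (Phi_inv_op n1 n2 n3 m phiinv (Phi_op n1 n2 n3 m phi Y))"
proof (intro allI impI)
  fix k assume k: "1 \<le> k \<and> k \<le> Suc N"
  have "0 \<le> 1 - 1 / real (min n1 n2)" using dims by simp
  then have "fro n1 n2 n3 (R k) \<le> sqrt (1 - 1 / real (min n1 n2)) ^ (k - 1) * fro n1 n2 n3 (R 1)"
    using k lrap_run_residual_contracts[OF dims phiinv s run]
    by (intro power_bound_of_contraction[where f = "\<lambda>k. fro n1 n2 n3 (R k)" and N = N]) auto
  then show "fro n1 n2 n3 (R k)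
      \<le> sqrt (1 - 1 / real (min n1 n2)) ^ (k - 1)
         * fro n1 n2 n3 (Phi_inv_op n1 n2 n3 m phiinv (Phi_op n1 n2 n3 m phi Y))"
    using lrap_run_start(1)[OF dims phiinv s run] by (simp add: proj_op_def)
qed

end
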